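(* Let $h>0$ and let $\Gamma_h\subset\mathbf{R}^3$ be the closed curve on the cylinder $x^2+y^2=1$ given by $\Gamma_h(t)=(\cos t,\sin t,z(t))$, $t\in[0,2\pi]$, where $z$ is the continuous piecewise linear function with $z(0)=z(\pi)=z(2\pi)=h/2$, $z(\pi/2)=z(3\pi/2)=-h/2$, linear on each interval $[k\pi/2,(k+1)\pi/2]$, $k=0,1,2,3$. (Thus $\Gamma_h$ consists of four helical segments joining cyclically the points $p_1=(1,0,h/2)$, $p_2=(0,1,-h/2)$, $p_3=(-1,0,h/2)$, $p_4=(0,-1,-h/2)$.) Let $\overline\Gamma_h$ be the orthogonal projection of $\Gamma_h$ into the $xz$-plane. Then the width of $\Gamma_h$ equals the width of $\overline\Gamma_h$.
   Context: The width of a set in $\mathbf{R}^3$ is the infimum of the distances between pairs of parallel planes such that the set lies between them. The width of the planar set $\overline\Gamma_h$ (in the $xz$-plane) is the infimum of the distances between pairs of parallel lines in the $xz$-plane such that $\overline\Gamma_h$ lies between them. *)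

theory Defs
  imports "HOL-Analysis.Analysis"
begin

definition width :: "'a::euclidean_space set \<Rightarrow> real" where
  "width S = Inf {b - a | u a b. norm u = 1 \<and> a \<le> b \<and> (\<forall>x\<in>S. a \<le> u \<bullet> x \<and> u \<bullet> x \<le> b)}"

definition zfun :: "real \<Rightarrow> real \<Rightarrow> real" where
  "zfun h t =
     (if t \<le> pi/2 then h/2 - 2*h*t/pi
      else if t \<le> pi then -h/2 + 2*h*(t - pi/2)/pi
      else if t \<le> 3*pi/2 then h/2 - 2*h*(t - pi)/pi
      else -h/2 + 2*h*(t - 3*pi/2)/pi)"

definition Gamma_curve :: "real \<Rightarrow> (real^3) set" where
  "Gamma_curve h = (\<lambda>t. vector [cos t, sin t, zfun h t]) ` {0..2*pi}"

text \<open>Its orthogonal projection into the xz-plane, with the xz-plane identified with R^2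
  via (x,0,z) \<mapsto> (x,z) (an isometry).\<close>
definition Gamma_proj :: "real \<Rightarrow> (real^2) set" where
  "Gamma_proj h = (\<lambda>p. vector [p$1, p$3]) ` Gamma_curve h"

end

theory Submission
  imports Defs
begin

text \<open>Write a unit vector of \<open>\<real>\<^sup>3\<close> as \<open>u = (r cos \<phi>, r sin \<phi>, s)\<close>, so that
  \<open>u \<bullet> \<Gamma>\<^sub>h(t) = r cos (t - \<phi>) + s z(t)\<close>, and let \<open>c = 2h/\<pi>\<close> be the slope of \<open>z\<close>.
  For \<open>a, b \<ge> 0\<close> with \<open>a + b = \<tau> \<le> \<pi>/2\<close> one finds a parameter at angular distance \<open>a\<close>
  from \<open>\<phi>\<close> and one at distance \<open>b\<close> from \<open>\<phi> + \<pi>\<close> whose heights differ by \<open>c \<tau>\<close>; since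
  \<open>cos a + cos b \<ge> 1 + cos \<tau>\<close>, every slab normal to \<open>u\<close> containing \<open>\<Gamma>\<^sub>h\<close> has width at
  least \<open>r + M\<close>, where \<open>M\<close> is the maximum of \<open>r cos \<tau> + c \<bar>s\<bar> \<tau>\<close> over \<open>0 \<le> \<tau> \<le> \<pi>/2\<close>.
  The projection lies in a slab of exactly this width normal to \<open>(r, \<bar>s\<bar>)\<close>. Conversely, a slab of the \<open>xz\<close>-plane normal to
  \<open>(v\<^sub>1, v\<^sub>2)\<close> lifts to a slab of \<open>\<real>\<^sup>3\<close> normal to \<open>(v\<^sub>1, 0, v\<^sub>2)\<close> of the same width.\<close>

lemma width_le:
  fixes S :: "'a::euclidean_space set"
  assumes "norm u = 1" "a \<le> b" "\<forall>x\<in>S. a \<le> u \<bullet> x \<and> u \<bullet> x \<le> b"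
  shows "width S \<le> b - a"
  unfolding width_def
  by (rule cInf_lower) (use assms in \<open>blast, auto intro: bdd_belowI[of _ 0]\<close>)

lemma width_ge:
  fixes S :: "'a::euclidean_space set"
  assumes "bounded S"
    and "\<And>u a b. norm u = 1 \<Longrightarrow> a \<le> b \<Longrightarrow> \<forall>x\<in>S. a \<le> u \<bullet> x \<and> u \<bullet> x \<le> b \<Longrightarrow> B \<le> b - a"
  shows "B \<le> width S"
proof -
  obtain R where "R > 0" and R: "\<forall>x\<in>S. norm x \<le> R"
    using assms(1) by (auto simp: bounded_pos)
  obtain e :: 'a where e: "e \<in> Basis"
    using nonempty_Basis by blast
  have "\<forall>x\<in>S. - R \<le> e \<bullet> x \<and> e \<bullet> x \<le> R"
  proof
    fix x assume "x \<in> S"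
    then have "\<bar>e \<bullet> x\<bar> \<le> R"
      using R Basis_le_norm[OF e, of x] by (auto simp: inner_commute)
    then show "- R \<le> e \<bullet> x \<and> e \<bullet> x \<le> R" by linarith
  qed
  with e norm_Basis[OF e] \<open>R > 0\<close>
  have "R - - R \<in> {b - a | u a b. norm u = 1 \<and> a \<le> b \<and> (\<forall>x\<in>S. a \<le> u \<bullet> x \<and> u \<bullet> x \<le> b)}"
    by fastforce
  then show ?thesis
    unfolding width_def by (intro cInf_greatest) (use assms(2) in auto)
qed

lemma width_le_width_image:
  fixes S :: "'a::euclidean_space set" and f :: "'a \<Rightarrow> 'b::euclidean_space"
  assumes "bounded (f ` S)"
    and "\<And>v. norm v = 1 \<Longrightarrow> \<exists>u. norm u = 1 \<and> (\<forall>x\<in>S. u \<bullet> x = v \<bullet> f x)"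
  shows "width S \<le> width (f ` S)"
proof (rule width_ge[OF assms(1)])
  fix v a b
  assume "norm v = 1" "a \<le> b" and slab: "\<forall>y\<in>f ` S. a \<le> v \<bullet> y \<and> v \<bullet> y \<le> b"
  then obtain u where "norm u = 1" "\<forall>x\<in>S. u \<bullet> x = v \<bullet> f x"
    using assms(2) by blast
  with \<open>a \<le> b\<close> slab show "width S \<le> b - a"
    by (intro width_le) auto
qed

lemma inner_vec3: "(u::real^3) \<bullet> v = u$1 * v$1 + u$2 * v$2 + u$3 * v$3"
  by (simp add: inner_vec_def sum_3)

lemma inner_vec2: "(u::real^2) \<bullet> v = u$1 * v$1 + u$2 * v$2"
  by (simp add: inner_vec_def sum_2)

lemma norm_vec3: "norm (u::real^3) = sqrt (u$1^2 + u$2^2 + u$3^2)"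
  by (simp add: norm_eq_sqrt_inner inner_vec3 power2_eq_square)

lemma norm_vec2: "norm (u::real^2) = sqrt (u$1^2 + u$2^2)"
  by (simp add: norm_eq_sqrt_inner inner_vec2 power2_eq_square)

lemma polar_form:
  fixes x y :: real
  obtains \<phi> where "0 \<le> \<phi>" "\<phi> \<le> 2*pi"
    "x = sqrt (x\<^sup>2 + y\<^sup>2) * cos \<phi>" "y = sqrt (x\<^sup>2 + y\<^sup>2) * sin \<phi>"
proof (cases "x\<^sup>2 + y\<^sup>2 = 0")
  case True
  then show ?thesis
    using that[of 0] by (simp add: add_nonneg_eq_0_iff)
next
  case False
  define r where "r = sqrt (x\<^sup>2 + y\<^sup>2)"
  have "x\<^sup>2 + y\<^sup>2 > 0"
    using False zero_le_power2[of x] zero_le_power2[of y] by linarith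
  then have "r > 0" "r\<^sup>2 = x\<^sup>2 + y\<^sup>2"
    unfolding r_def by (simp_all only: real_sqrt_gt_zero real_sqrt_pow2 less_imp_le)
  have "(x / r)\<^sup>2 + (y / r)\<^sup>2 = (x\<^sup>2 + y\<^sup>2) / r\<^sup>2"
    by (simp only: power_divide add_divide_distrib)
  also have "\<dots> = 1"
    using \<open>r > 0\<close> by (simp flip: \<open>r\<^sup>2 = x\<^sup>2 + y\<^sup>2\<close>)
  finally have "(x / r)\<^sup>2 + (y / r)\<^sup>2 = 1" .
  then obtain \<phi> where "0 \<le> \<phi>" "\<phi> \<le> 2*pi" "x / r = cos \<phi>" "y / r = sin \<phi>"
    using sincos_total_2pi_le by blast
  moreover from this \<open>r > 0\<close> have "x = r * cos \<phi>" "y = r * sin \<phi>"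
    by (simp_all add: field_simps)
  ultimately show ?thesis
    using that[of \<phi>] unfolding r_def by blast
qed

lemma one_minus_cos_le_sin:
  assumes "0 \<le> a" "a \<le> pi/2"
  shows "1 - cos a \<le> sin a"
proof -
  have "sin a \<ge> 0" "cos a \<ge> 0"
    using assms by (auto intro: sin_ge_zero cos_ge_zero)
  then have "1 \<le> (sin a + cos a)\<^sup>2"
    using sin_cos_squared_add[of a] by (simp add: power2_sum)
  with \<open>sin a \<ge> 0\<close> \<open>cos a \<ge> 0\<close> have "1 \<le> sin a + cos a"
    by (metis abs_le_square_iff abs_of_nonneg add_nonneg_nonneg one_power2 abs_one)
  then show ?thesis by simp
qed

lemma one_plus_cos_add_le:
  assumes "0 \<le> a" "a \<le> pi/2" "0 \<le> b" "b \<le> pi/2"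
  shows "1 + cos (a + b) \<le> cos a + cos b"
proof -
  have "(1 - cos a) * (1 - cos b) \<le> sin a * sin b"
    using assms one_minus_cos_le_sin[of a] one_minus_cos_le_sin[of b]
    by (intro mult_mono) (auto intro: sin_ge_zero)
  then show ?thesis
    by (simp add: cos_add algebra_simps)
qed

definition cos_lin_sup :: "real \<Rightarrow> real \<Rightarrow> real" where
  "cos_lin_sup r k = (SUP \<tau>\<in>{0..pi/2}. r * cos \<tau> + k * \<tau>)"

lemma cos_lin_sup_upper:
  assumes "0 \<le> \<tau>" "\<tau> \<le> pi/2"
  shows "r * cos \<tau> + k * \<tau> \<le> cos_lin_sup r k"
  unfolding cos_lin_sup_def
proof (rule cSUP_upper)
  show "\<tau> \<in> {0..pi/2}" using assms by simp
  show "bdd_above ((\<lambda>\<tau>. r * cos \<tau> + k * \<tau>) ` {0..pi/2})"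
    by (intro bounded_imp_bdd_above compact_imp_bounded compact_continuous_image
        continuous_intros compact_Icc)
qed

lemma cos_lin_sup_least:
  assumes "\<And>\<tau>. 0 \<le> \<tau> \<Longrightarrow> \<tau> \<le> pi/2 \<Longrightarrow> r * cos \<tau> + k * \<tau> \<le> B"
  shows "cos_lin_sup r k \<le> B"
  unfolding cos_lin_sup_def by (rule cSUP_least) (use assms in auto)

lemma zfun_quarter1: "0 \<le> t \<Longrightarrow> t \<le> pi/2 \<Longrightarrow> zfun h t = h/2 - 2*h*t/pi"
  by (simp add: zfun_def)

lemma zfun_quarter2: "pi/2 \<le> t \<Longrightarrow> t \<le> pi \<Longrightarrow> zfun h t = - h/2 + 2*h*(t - pi/2)/pi"
  by (auto simp: zfun_def field_simps)

lemma zfun_quarter3: "pi \<le> t \<Longrightarrow> t \<le> 3*pi/2 \<Longrightarrow> zfun h t = h/2 - 2*h*(t - pi)/pi"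
  by (auto simp: zfun_def field_simps)

lemma zfun_quarter4:
  assumes "3*pi/2 \<le> t"
  shows "zfun h t = - h/2 + 2*h*(t - 3*pi/2)/pi"
proof -
  have "\<not> t \<le> pi/2" "\<not> t \<le> pi" "t \<le> 3*pi/2 \<longleftrightarrow> t = 3*pi/2"
    using assms pi_gt_zero by linarith+
  then show ?thesis
    by (auto simp: zfun_def field_simps)
qed

lemma zfun_fold:
  assumes "0 \<le> t" "t \<le> 2*pi"
  obtains \<tau> where "0 \<le> \<tau>" "\<tau> \<le> pi/2" "zfun h t = h/2 - 2*h/pi * \<tau>" "- cos \<tau> \<le> cos t"
proof -
  consider "t \<le> pi/2" | "pi/2 < t" "t \<le> pi" | "pi < t" "t \<le> 3*pi/2" | "3*pi/2 < t"
    by linarith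
  then show ?thesis
  proof cases
    case 1
    have "0 \<le> cos t" using 1 assms by (intro cos_ge_zero) auto
    then show ?thesis
      using 1 assms that[of t] by (simp add: zfun_def)
  next
    case 2
    then show ?thesis
      using that[of "pi - t"] by (simp add: zfun_def field_simps)
  next
    case 3
    then show ?thesis
      using that[of "t - pi"] by (simp add: zfun_def cos_diff field_simps)
  next
    case 4
    have "0 \<le> cos (2*pi - t)" using 4 assms by (intro cos_ge_zero) auto
    then show ?thesis
      using 4 assms that[of "2*pi - t"] by (simp add: zfun_def cos_diff field_simps)
  qed
qed

text \<open>The witnesses lie at angular distance \<open>a\<close> from \<open>\<phi>\<close> and \<open>b\<close> from \<open>\<phi> + \<pi>\<close>, with
  \<open>a + b = \<tau>\<close>, on the sides towards which \<open>z\<close> increases resp. decreases; which sides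
  these are depends on the quarter of the circle containing \<open>\<phi>\<close>.\<close>

lemma zfun_antipodal_pair:
  assumes "0 \<le> \<phi>" "\<phi> \<le> 2*pi" "0 \<le> \<tau>" "\<tau> \<le> pi/2"
  shows "\<exists>t1\<in>{0..2*pi}. \<exists>t2\<in>{0..2*pi}.
    1 + cos \<tau> \<le> cos (t1 - \<phi>) - cos (t2 - \<phi>) \<and> zfun h t1 - zfun h t2 = 2*h/pi * \<tau>"
proof -
  have pair: ?thesis
    if "t1 \<in> {0..2*pi}" "t2 \<in> {0..2*pi}" "0 \<le> a" "a \<le> pi/2" "0 \<le> b" "b \<le> pi/2" "\<tau> = a + b"
      "cos (t1 - \<phi>) = cos a" "cos (t2 - \<phi>) = - cos b" "zfun h t1 - zfun h t2 = 2*h/pi * \<tau>"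
    for t1 t2 a b
    using that one_plus_cos_add_le[of a b] by (intro bexI[of _ t1] bexI[of _ t2]) auto
  consider "\<phi> \<le> pi/2" | "pi/2 \<le> \<phi>" "\<phi> \<le> pi" | "pi \<le> \<phi>" "\<phi> \<le> 3*pi/2" | "3*pi/2 \<le> \<phi>"
    by linarith
  then show ?thesis
  proof cases
    case 1
    define b where "b = min \<tau> (pi/2 - \<phi>)"
    define a where "a = \<tau> - b"
    have "0 \<le> a" "a \<le> \<phi>" "0 \<le> b" "b \<le> pi/2 - \<phi>" "\<tau> = a + b"
      using 1 assms unfolding a_def b_def by (auto simp: min_def)
    then show ?thesis
      using 1 assms by (intro pair[of "\<phi> - a" "\<phi> + b + pi" a b])
        (simp_all add: zfun_quarter1 zfun_quarter3 field_simps)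
  next
    case 2
    define b where "b = min \<tau> (pi - \<phi>)"
    define a where "a = \<tau> - b"
    have "0 \<le> a" "a \<le> \<phi> - pi/2" "0 \<le> b" "b \<le> pi - \<phi>" "\<tau> = a + b"
      using 2 assms unfolding a_def b_def by (auto simp: min_def)
    then show ?thesis
      using 2 assms by (intro pair[of "\<phi> + b" "\<phi> - a + pi" b a])
        (simp_all add: zfun_quarter2 zfun_quarter4 field_simps)
  next
    case 3
    define b where "b = min \<tau> (3*pi/2 - \<phi>)"
    define a where "a = \<tau> - b"
    have "0 \<le> a" "a \<le> \<phi> - pi" "0 \<le> b" "b \<le> 3*pi/2 - \<phi>" "\<tau> = a + b"
      using 3 assms unfolding a_def b_def by (auto simp: min_def)
    then show ?thesis
      using 3 assms by (intro pair[of "\<phi> - a" "\<phi> + b - pi" a b])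
        (simp_all add: zfun_quarter1 zfun_quarter3 field_simps)
  next
    case 4
    define b where "b = min \<tau> (2*pi - \<phi>)"
    define a where "a = \<tau> - b"
    have "0 \<le> a" "a \<le> \<phi> - 3*pi/2" "0 \<le> b" "b \<le> 2*pi - \<phi>" "\<tau> = a + b"
      using 4 assms unfolding a_def b_def by (auto simp: min_def)
    then show ?thesis
      using 4 assms by (intro pair[of "\<phi> + b" "\<phi> - a - pi" b a])
        (simp_all add: zfun_quarter2 zfun_quarter4 cos_diff field_simps)
  qed
qed

definition Gamma_param :: "real \<Rightarrow> real \<Rightarrow> real^3" where
  "Gamma_param h t = vector [cos t, sin t, zfun h t]"

lemma Gamma_curve_eq: "Gamma_curve h = Gamma_param h ` {0..2*pi}"
  unfolding Gamma_curve_def Gamma_param_def ..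

lemma inner_Gamma_param:
  assumes "u$1 = r * cos \<phi>" "u$2 = r * sin \<phi>"
  shows "u \<bullet> Gamma_param h t = r * cos (t - \<phi>) + u$3 * zfun h t"
  using assms by (simp add: Gamma_param_def inner_vec3 cos_diff algebra_simps)

lemma bounded_Gamma_curve: "bounded (Gamma_curve h)"
proof -
  have "norm (Gamma_param h t) \<le> 2 + \<bar>h\<bar>" if t: "0 \<le> t" "t \<le> 2*pi" for t
  proof -
    obtain \<tau> where \<tau>: "0 \<le> \<tau>" "\<tau> \<le> pi/2" "zfun h t = h/2 - 2*h/pi * \<tau>"
      using zfun_fold[OF t] by blast
    have "0 \<le> 2*\<tau>/pi" "2*\<tau>/pi \<le> 1"
      using \<tau>(1,2) by (simp_all add: divide_le_eq)
    then have "\<bar>1/2 - 2*\<tau>/pi\<bar> \<le> 1"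
      by linarith
    have "\<bar>zfun h t\<bar> = \<bar>h\<bar> * \<bar>1/2 - 2*\<tau>/pi\<bar>"
      unfolding \<tau>(3) abs_mult[symmetric] by (simp add: algebra_simps)
    also have "\<dots> \<le> \<bar>h\<bar>"
      using mult_left_mono[OF \<open>\<bar>1/2 - 2*\<tau>/pi\<bar> \<le> 1\<close>, of "\<bar>h\<bar>"] by simp
    finally have "\<bar>zfun h t\<bar> \<le> \<bar>h\<bar>" .
    moreover have "norm (Gamma_param h t) \<le> \<bar>cos t\<bar> + \<bar>sin t\<bar> + \<bar>zfun h t\<bar>"
      using norm_le_l1_cart[of "Gamma_param h t"] by (simp add: Gamma_param_def sum_3)
    ultimately show ?thesis
      using abs_cos_le_one[of t] abs_sin_le_one[of t] by linarith
  qed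
  then show ?thesis
    unfolding Gamma_curve_eq bounded_iff by (intro exI[of _ "2 + \<bar>h\<bar>"]) auto
qed

lemma Gamma_curve_slab_lower:
  assumes slab: "\<forall>x\<in>Gamma_curve h. a \<le> u \<bullet> x \<and> u \<bullet> x \<le> b"
  shows "sqrt (u$1^2 + u$2^2) + cos_lin_sup (sqrt (u$1^2 + u$2^2)) (2*h/pi * \<bar>u$3\<bar>) \<le> b - a"
proof -
  define r where "r = sqrt (u$1^2 + u$2^2)"
  define w where "w = (if u$3 \<ge> 0 then u else - u)"
  have w: "w$3 = \<bar>u$3\<bar>" "r = sqrt (w$1^2 + w$2^2)"
    unfolding w_def r_def by auto
  have spread: "w \<bullet> x - w \<bullet> y \<le> b - a" if "x \<in> Gamma_curve h" "y \<in> Gamma_curve h" for x y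
    using slab[rule_format, OF that(1)] slab[rule_format, OF that(2)]
    unfolding w_def by (auto simp: inner_minus_left)
  obtain \<phi> where \<phi>: "0 \<le> \<phi>" "\<phi> \<le> 2*pi" "w$1 = r * cos \<phi>" "w$2 = r * sin \<phi>"
    using polar_form[of "w$1" "w$2"] w(2) by metis
  have "cos_lin_sup r (2*h/pi * \<bar>u$3\<bar>) \<le> b - a - r"
  proof (rule cos_lin_sup_least)
    fix \<tau> :: real
    assume "0 \<le> \<tau>" "\<tau> \<le> pi/2"
    then obtain t1 t2 where t: "t1 \<in> {0..2*pi}" "t2 \<in> {0..2*pi}"
      and cos_gap: "1 + cos \<tau> \<le> cos (t1 - \<phi>) - cos (t2 - \<phi>)"
      and z_gap: "zfun h t1 - zfun h t2 = 2*h/pi * \<tau>"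
      using zfun_antipodal_pair \<phi>(1,2) by blast
    have "r * (1 + cos \<tau>) \<le> r * (cos (t1 - \<phi>) - cos (t2 - \<phi>))"
      using cos_gap unfolding r_def by (intro mult_left_mono) auto
    then have "r + (r * cos \<tau> + 2*h/pi * \<bar>u$3\<bar> * \<tau>) \<le> w \<bullet> Gamma_param h t1 - w \<bullet> Gamma_param h t2"
      using z_gap by (simp add: inner_Gamma_param[OF \<phi>(3,4)] w(1) algebra_simps)
    also have "\<dots> \<le> b - a"
      using t by (intro spread) (auto simp: Gamma_curve_eq)
    finally show "r * cos \<tau> + 2*h/pi * \<bar>u$3\<bar> * \<tau> \<le> b - a - r"
      by linarith
  qed
  then show ?thesis
    unfolding r_def by linarith
qed

lemma Gamma_proj_width_le:
  assumes "h \<ge> 0" "r \<ge> 0" "s \<ge> 0" "r\<^sup>2 + s\<^sup>2 = 1"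
  shows "width (Gamma_proj h) \<le> r + cos_lin_sup r (2*h/pi * s)"
proof -
  define M where "M = cos_lin_sup r (2*h/pi * s)"
  have "r \<le> M"
    using cos_lin_sup_upper[of 0 r "2*h/pi * s"] unfolding M_def by simp
  have slab: "s*h/2 - M \<le> r * cos t + s * zfun h t \<and> r * cos t + s * zfun h t \<le> r + s*h/2"
    if t: "0 \<le> t" "t \<le> 2*pi" for t
  proof -
    obtain \<tau> where \<tau>: "0 \<le> \<tau>" "\<tau> \<le> pi/2" "zfun h t = h/2 - 2*h/pi * \<tau>" "- cos \<tau> \<le> cos t"
      using zfun_fold[OF t] by blast
    have "r * cos \<tau> + 2*h/pi * s * \<tau> \<le> M"
      using cos_lin_sup_upper[OF \<tau>(1,2)] unfolding M_def .
    moreover have "- (r * cos \<tau>) \<le> r * cos t" "r * cos t \<le> r"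
      using \<tau>(4) \<open>r \<ge> 0\<close> mult_left_mono[of "- cos \<tau>" "cos t" r] mult_left_mono[of "cos t" 1 r] by auto
    moreover have "0 \<le> 2*h/pi * s * \<tau>"
      using assms \<tau>(1) by simp
    moreover have "s * zfun h t = s*h/2 - 2*h/pi * s * \<tau>"
      unfolding \<tau>(3) by (simp add: algebra_simps)
    ultimately show ?thesis
      by linarith
  qed
  have "norm (vector [r, s] :: real^2) = 1"
    using assms(4) by (simp add: norm_vec2)
  moreover have "\<forall>x\<in>Gamma_proj h. s*h/2 - M \<le> (vector [r, s] :: real^2) \<bullet> x \<and> (vector [r, s] :: real^2) \<bullet> x \<le> r + s*h/2"
    using slab unfolding Gamma_proj_def Gamma_curve_eq Gamma_param_def by (auto simp: inner_vec2)
  ultimately have "width (Gamma_proj h) \<le> r + s*h/2 - (s*h/2 - M)"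
    using \<open>r \<le> M\<close> \<open>r \<ge> 0\<close> by (intro width_le) auto
  then show ?thesis
    unfolding M_def by simp
qed

theorem lemma5p1:
  fixes h :: real
  assumes "h > 0"
  shows "width (Gamma_curve h) = width (Gamma_proj h)"
proof (rule antisym)
  have "bounded_linear (\<lambda>p::real^3. vector [p$1, p$3] :: real^2)"
    by (simp add: linear_conv_bounded_linear[symmetric] linearI vec_eq_iff forall_2)
  then have bounded_proj: "bounded (Gamma_proj h)"
    unfolding Gamma_proj_def by (rule bounded_linear_image[OF bounded_Gamma_curve])
  show "width (Gamma_curve h) \<le> width (Gamma_proj h)"
    using bounded_proj unfolding Gamma_proj_def
  proof (rule width_le_width_image)
    fix v :: "real^2"
    assume "norm v = 1"
    then show "\<exists>u. norm u = 1 \<and> (\<forall>p\<in>Gamma_curve h. u \<bullet> p = v \<bullet> vector [p$1, p$3])"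
      by (intro exI[of _ "vector [v$1, 0, v$2] :: real^3"]) (simp add: norm_vec2 norm_vec3 inner_vec2 inner_vec3)
  qed
  show "width (Gamma_proj h) \<le> width (Gamma_curve h)"
  proof (rule width_ge[OF bounded_Gamma_curve])
    fix u :: "real^3" and a b
    assume "norm u = 1" "a \<le> b" and slab: "\<forall>x\<in>Gamma_curve h. a \<le> u \<bullet> x \<and> u \<bullet> x \<le> b"
    define r where "r = sqrt (u$1^2 + u$2^2)"
    have "r\<^sup>2 + \<bar>u$3\<bar>\<^sup>2 = 1"
      using \<open>norm u = 1\<close> unfolding r_def by (simp add: norm_vec3)
    then have "width (Gamma_proj h) \<le> r + cos_lin_sup r (2*h/pi * \<bar>u$3\<bar>)"
      using assms unfolding r_def by (intro Gamma_proj_width_le) auto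
    also have "\<dots> \<le> b - a"
      using Gamma_curve_slab_lower[OF slab] unfolding r_def .
    finally show "width (Gamma_proj h) \<le> b - a" .
  qed
qed

end
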